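(* Let $r\ge5$, let $T$ be a $K_r$-tree, let $G$ be a graph, and let $S=V(G)\cap V(T)$. Then, for any run of the $(r-2)_*$-BP process on $T$ with seed set $S$, \[ \langle G\cup T\rangle_{K_r}\subseteq Q\cup T, \] where $Q$ is the complete graph on the vertex set $V(G)\cup\langle S;T\rangle_*$.
   Context: A graph $T$ is a $K_r$-tree if it is the union of copies $H_1,\dots,H_\vartheta$ of $K_r$ such that for each $1<i\le\vartheta$, $H_i$ shares exactly one edge with $H_1\cup\cdots\cup H_{i-1}$ (the common vertices being exactly the two endpoints of that edge). An edge of $T$ is internal if it lies in at least two of the $H_i$. The $(r-2)_*$-bootstrap percolation process on $T$ with seed set $S\subseteq V(T)$: initially the vertices of $S$ are infected; in each step, either (usual step) some uninfected vertex with at least $r-2$ infected neighbors in $T$ becomes infected; or else (special step), if no usual step is possible but for some internal edge $f$ there are two copies $H_i\ne H_j$ containing $f$ such that $H_i$ has $r-4$ infected vertices and $H_j$ has $1$ infected vertex, all these $r-3$ vertices not in $f$, then an arbitrarily chosen vertex $u\in f$ becomes infected; otherwise the process terminates. $\langle S;T\rangle_*$ denotes the set of eventually infected vertices. For a graph $F$, the $K_r$-dynamics repeatedly adds an edge whenever it is the only missing edge of some copy of $K_r$ on the vertex set of $F$; $\langle F\rangle_{K_r}$ is the final graph. *)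

theory Defs
  imports Main
begin

text \<open>Graphs are given by a vertex set and a set of edges, each edge being a
two-element set of vertices.\<close>

definition complete_edges :: "'a set \<Rightarrow> 'a set set" where
  "complete_edges V = {{x, y} | x y. x \<noteq> y \<and> x \<in> V \<and> y \<in> V}"

definition is_graph :: "'a set \<Rightarrow> 'a set set \<Rightarrow> bool" where
  "is_graph V E \<longleftrightarrow> E \<subseteq> complete_edges V"

text \<open>A K_r-tree, given by the list of vertex sets of its copies H_1, ..., H_theta of K_r.\<close>

definition kr_tree :: "nat \<Rightarrow> 'a set list \<Rightarrow> bool" where
  "kr_tree r Hs \<longleftrightarrow> Hs \<noteq> [] \<and> (\<forall>H\<in>set Hs. finite H \<and> card H = r) \<and>
     (\<forall>i. 0 < i \<and> i < length Hs \<longrightarrow>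
        (\<exists>x y. x \<noteq> y \<and> Hs ! i \<inter> \<Union> (set (take i Hs)) = {x, y} \<and>
               (\<exists>j<i. x \<in> Hs ! j \<and> y \<in> Hs ! j)))"

definition tree_verts :: "'a set list \<Rightarrow> 'a set" where
  "tree_verts Hs = \<Union> (set Hs)"

definition tree_edges :: "'a set list \<Rightarrow> 'a set set" where
  "tree_edges Hs = (\<Union>H\<in>set Hs. complete_edges H)"

definition internal_edge :: "'a set list \<Rightarrow> 'a set \<Rightarrow> bool" where
  "internal_edge Hs f \<longleftrightarrow> f \<in> tree_edges Hs \<and>
     (\<exists>i j. i < length Hs \<and> j < length Hs \<and> i \<noteq> j \<and> f \<subseteq> Hs ! i \<and> f \<subseteq> Hs ! j)"

definition usual_step :: "nat \<Rightarrow> 'a set list \<Rightarrow> 'a set \<Rightarrow> 'a \<Rightarrow> bool" where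
  "usual_step r Hs A v \<longleftrightarrow> v \<in> tree_verts Hs \<and> v \<notin> A \<and>
     r - 2 \<le> card {w \<in> A. {v, w} \<in> tree_edges Hs}"

definition bp_step :: "nat \<Rightarrow> 'a set list \<Rightarrow> 'a set \<Rightarrow> 'a set \<Rightarrow> bool" where
  "bp_step r Hs A A' \<longleftrightarrow>
     (\<exists>v. usual_step r Hs A v \<and> A' = insert v A) \<or>
     ((\<nexists>v. usual_step r Hs A v) \<and>
      (\<exists>f i j u. internal_edge Hs f \<and> i < length Hs \<and> j < length Hs \<and> i \<noteq> j \<and>
         f \<subseteq> Hs ! i \<and> f \<subseteq> Hs ! j \<and>
         card (Hs ! i \<inter> A) = r - 4 \<and> card (Hs ! j \<inter> A) = 1 \<and> f \<inter> A = {} \<and>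
         u \<in> f \<and> A' = insert u A))"

definition bp_final :: "nat \<Rightarrow> 'a set list \<Rightarrow> 'a set \<Rightarrow> 'a set \<Rightarrow> bool" where
  "bp_final r Hs S F \<longleftrightarrow> (bp_step r Hs)\<^sup>*\<^sup>* S F \<and> \<not> (\<exists>F'. bp_step r Hs F F')"

text \<open>The final edge set of the K_r-dynamics on the graph (V, E): the least edge set containing E
  closed under adding an edge which is the only missing edge of a copy of K_r on V.\<close>

inductive_set kr_closure :: "nat \<Rightarrow> 'a set \<Rightarrow> 'a set set \<Rightarrow> 'a set set"
  for r :: nat and V :: "'a set" and E :: "'a set set" where
  base: "e \<in> E \<Longrightarrow> e \<in> kr_closure r V E"
| add: "K \<subseteq> V \<Longrightarrow> finite K \<Longrightarrow> card K = r \<Longrightarrow> u \<in> K \<Longrightarrow> v \<in> K \<Longrightarrow> u \<noteq> v \<Longrightarrow>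
        (\<forall>x\<in>K. \<forall>y\<in>K. x \<noteq> y \<and> {x, y} \<noteq> {u, v} \<longrightarrow> {x, y} \<in> kr_closure r V E) \<Longrightarrow>
        {u, v} \<in> kr_closure r V E"

end

(* Let E be complete_edges (V(G) \<union> F) \<union> E(T). It contains G \<union> T, so it suffices that E
   is closed under the K_r-dynamics. Take an r-set K all of whose pairs except uv lie in E, with u
   outside V(G) \<union> F, and let X = K - {u, v}. Every pair of K through a vertex outside
   V(G) \<union> F is an edge of T; as u has fewer than r - 2 infected neighbours in T, some vertex y
   of X is uninfected, and y is adjacent in T to all of K.
   K_r-trees have the running intersection property, so cliques of T lie in one copy of K_r and
   4-cycles of T have chords; moreover two copies share at most two vertices. If v is outside
   V(G) \<union> F as well, u and v have the r - 2 \<ge> 3 common neighbours X, which forces uv \<in> E(T).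
   Otherwise v, a vertex of T in V(G) \<union> F, is infected, so y has the fewer than r - 2 infected
   neighbours v and X \<inter> F, and X contains two uninfected vertices y1, y2. The copies H \<supseteq> X + u
   and G \<ni> v through the edge y1 y2 then meet exactly in y1 y2, and counting the infected
   neighbours of y1 shows that H and G carry exactly r - 4 and 1 infected vertices: a special step
   would still be possible. *)

theory Submission
  imports Defs
begin

section \<open>Adjacency in the union of the copies\<close>

definition tree_adj :: "'a set list \<Rightarrow> 'a \<Rightarrow> 'a \<Rightarrow> bool" where
  "tree_adj Hs p q \<longleftrightarrow> p \<noteq> q \<and> (\<exists>H\<in>set Hs. p \<in> H \<and> q \<in> H)"

lemma tree_adj_sym: "tree_adj Hs p q \<Longrightarrow> tree_adj Hs q p"
  unfolding tree_adj_def by blast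

lemma tree_adj_commute: "tree_adj Hs p q \<longleftrightarrow> tree_adj Hs q p"
  unfolding tree_adj_def by blast

lemma tree_adj_snoc:
  "tree_adj (Hs @ [H]) p q \<longleftrightarrow> tree_adj Hs p q \<or> p \<noteq> q \<and> p \<in> H \<and> q \<in> H"
  unfolding tree_adj_def by auto

lemma tree_adj_in_tree_verts: "tree_adj Hs p q \<Longrightarrow> p \<in> tree_verts Hs \<and> q \<in> tree_verts Hs"
  unfolding tree_adj_def tree_verts_def by blast

lemma doubleton_in_tree_edges_iff: "{p, q} \<in> tree_edges Hs \<longleftrightarrow> tree_adj Hs p q"
  unfolding tree_edges_def complete_edges_def tree_adj_def by (auto simp: doubleton_eq_iff)

lemma doubleton_in_complete_edges_iff:
  "{p, q} \<in> complete_edges V \<longleftrightarrow> p \<noteq> q \<and> p \<in> V \<and> q \<in> V"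
  unfolding complete_edges_def by (auto simp: doubleton_eq_iff)

lemma complete_edges_mono: "V \<subseteq> W \<Longrightarrow> complete_edges V \<subseteq> complete_edges W"
  unfolding complete_edges_def by fast

section \<open>The running intersection property\<close>

inductive running_intersection :: "'a set list \<Rightarrow> bool" where
  single: "running_intersection [H]"
| snoc: "running_intersection Hs \<Longrightarrow> G \<in> set Hs \<Longrightarrow> H \<inter> tree_verts Hs \<subseteq> G \<Longrightarrow>
    running_intersection (Hs @ [H])"

lemma running_intersection_clique_in_copy:
  assumes "running_intersection Hs" and "a \<in> Z" "b \<in> Z" "a \<noteq> b"
    and "\<And>p q. p \<in> Z \<Longrightarrow> q \<in> Z \<Longrightarrow> p \<noteq> q \<Longrightarrow> tree_adj Hs p q"
  shows "\<exists>H\<in>set Hs. Z \<subseteq> H"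
  using assms
proof (induction rule: running_intersection.induct)
  case (single H)
  then have "p \<in> H" if "p \<in> Z" for p
    using that unfolding tree_adj_def by (cases "p = a") auto
  then show ?case by auto
next
  case (snoc Hs G H)
  show ?case
  proof (cases "Z \<subseteq> tree_verts Hs")
    case True
    have "tree_adj Hs p q" if "p \<in> Z" "q \<in> Z" "p \<noteq> q" for p q
      using snoc.prems(4)[OF that] snoc.hyps(2,3) True that
      unfolding tree_adj_snoc by (auto simp: tree_adj_def)
    then show ?thesis using snoc.IH snoc.prems(1-3) by auto
  next
    case False
    then obtain w where w: "w \<in> Z" "w \<notin> tree_verts Hs" by blast
    have "p \<in> H \<and> w \<in> H" if "p \<in> Z" "p \<noteq> w" for p
      using snoc.prems(4)[OF that(1) w(1) that(2)] w(2)
      unfolding tree_adj_snoc by (auto dest: tree_adj_in_tree_verts)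
    then have "Z \<subseteq> H" using snoc.prems(1-3) by blast
    then show ?thesis by auto
  qed
qed

lemma running_intersection_square_chord:
  assumes "running_intersection Hs"
    and "tree_adj Hs a b" "tree_adj Hs b c" "tree_adj Hs c d" "tree_adj Hs d a"
    and "a \<noteq> c" "b \<noteq> d"
  shows "tree_adj Hs a c \<or> tree_adj Hs b d"
  using assms
proof (induction rule: running_intersection.induct)
  case (single H)
  then show ?case unfolding tree_adj_def by auto
next
  case (snoc Hs G H)
  show ?case
  proof (cases "{a, b, c, d} \<subseteq> tree_verts Hs")
    case True
    have "tree_adj Hs p q" if "tree_adj (Hs @ [H]) p q" "p \<in> tree_verts Hs" "q \<in> tree_verts Hs"
      for p q
      using that snoc.hyps(2,3) unfolding tree_adj_snoc by (auto simp: tree_adj_def)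
    then show ?thesis using snoc.IH snoc.prems True by (auto simp: tree_adj_snoc)
  next
    case False
    have "p \<in> H \<and> q \<in> H" if "tree_adj (Hs @ [H]) p q" "p \<notin> tree_verts Hs \<or> q \<notin> tree_verts Hs"
      for p q
      using that unfolding tree_adj_snoc by (auto dest: tree_adj_in_tree_verts)
    then show ?thesis using False snoc.prems by (auto simp: tree_adj_snoc)
  qed
qed

section \<open>Copies of K_r in a K_r-tree\<close>

lemma kr_tree_finite_copy: "kr_tree r Hs \<Longrightarrow> H \<in> set Hs \<Longrightarrow> finite H"
  unfolding kr_tree_def by blast

lemma kr_tree_finite_tree_verts: "kr_tree r Hs \<Longrightarrow> finite (tree_verts Hs)"
  unfolding tree_verts_def by (blast intro: kr_tree_finite_copy)

lemma kr_tree_finite_neighbours: "kr_tree r Hs \<Longrightarrow> finite {w \<in> A. tree_adj Hs v w}"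
  by (rule finite_subset[OF _ kr_tree_finite_tree_verts]) (auto dest: tree_adj_in_tree_verts)

lemma kr_tree_imp_running_intersection:
  assumes "kr_tree r Hs"
  shows "running_intersection Hs"
proof -
  have "n \<le> length Hs \<longrightarrow> running_intersection (take n Hs)" if "1 \<le> n" for n
    using that
  proof (induction n rule: nat_induct_at_least)
    case base
    from assms obtain H Hs' where "Hs = H # Hs'"
      unfolding kr_tree_def by (cases Hs) auto
    then show ?case by (simp add: running_intersection.single)
  next
    case (Suc n)
    show ?case
    proof
      assume n: "Suc n \<le> length Hs"
      have "0 < n" "n < length Hs" using Suc.hyps n by auto
      then obtain x y j where xy: "Hs ! n \<inter> tree_verts (take n Hs) = {x, y}"
        and j: "j < n" "x \<in> Hs ! j" "y \<in> Hs ! j"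
        using assms unfolding kr_tree_def tree_verts_def by blast
      have "Hs ! j \<in> set (take n Hs)"
        using j(1) n by (auto simp: in_set_conv_nth)
      then have "running_intersection (take n Hs @ [Hs ! n])"
        using Suc.IH n xy j by (auto intro: running_intersection.snoc)
      then show "running_intersection (take (Suc n) Hs)"
        using n by (simp add: take_Suc_conv_app_nth)
    qed
  qed
  moreover have "1 \<le> length Hs"
    using assms unfolding kr_tree_def by (cases Hs) auto
  ultimately have "running_intersection (take (length Hs) Hs)" by blast
  then show ?thesis by simp
qed

lemma kr_tree_card_Int_copies:
  assumes "kr_tree r Hs" "H \<in> set Hs" "G \<in> set Hs" "H \<noteq> G"
  shows "card (H \<inter> G) \<le> 2"
proof -
  have earlier: "card (Hs ! i \<inter> Hs ! j) \<le> 2" if ij: "i < j" "j < length Hs" for i j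
  proof -
    have "0 < j" using ij by simp
    then obtain x y where "Hs ! j \<inter> \<Union>(set (take j Hs)) = {x, y}"
      using assms(1) ij(2) unfolding kr_tree_def by blast
    moreover have "Hs ! i \<in> set (take j Hs)"
      using ij by (auto simp: in_set_conv_nth)
    ultimately have "Hs ! i \<inter> Hs ! j \<subseteq> {x, y}" by blast
    then have "card (Hs ! i \<inter> Hs ! j) \<le> card {x, y}" by (intro card_mono) auto
    also have "\<dots> \<le> 2" by (simp add: card_insert_if)
    finally show ?thesis .
  qed
  obtain i j where "i < length Hs" "j < length Hs" "H = Hs ! i" "G = Hs ! j"
    using assms(2,3) by (auto simp: in_set_conv_nth)
  with assms(4) have "i < j \<or> j < i" by auto
  with \<open>H = Hs ! i\<close> \<open>G = Hs ! j\<close> earlier[of i j] earlier[of j i] show ?thesis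
    using \<open>i < length Hs\<close> \<open>j < length Hs\<close> by (auto simp: Int_commute)
qed

lemma kr_tree_copies_eqI:
  assumes "kr_tree r Hs" "H \<in> set Hs" "G \<in> set Hs"
    and "{a, b, c} \<subseteq> H \<inter> G" "a \<noteq> b" "a \<noteq> c" "b \<noteq> c"
  shows "H = G"
proof (rule ccontr)
  assume "H \<noteq> G"
  then have "card (H \<inter> G) \<le> 2"
    using kr_tree_card_Int_copies assms(1-3) by blast
  moreover have "card {a, b, c} \<le> card (H \<inter> G)"
    using assms by (intro card_mono) (auto intro: kr_tree_finite_copy)
  ultimately show False using assms(5-7) by simp
qed

lemma kr_tree_triangle_copy:
  assumes kr: "kr_tree r Hs" and ab: "tree_adj Hs a b" and ac: "tree_adj Hs a c"
    and bc: "tree_adj Hs b c"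
  obtains H where "H \<in> set Hs" "{a, b, c} \<subseteq> H"
    and "\<And>x. tree_adj Hs x a \<Longrightarrow> tree_adj Hs x b \<Longrightarrow> tree_adj Hs x c \<Longrightarrow> x \<in> H"
proof -
  have RI: "running_intersection Hs"
    using kr by (rule kr_tree_imp_running_intersection)
  have distinct: "a \<noteq> b" "a \<noteq> c" "b \<noteq> c"
    using ab ac bc unfolding tree_adj_def by auto
  note sym = tree_adj_sym[OF ab] tree_adj_sym[OF ac] tree_adj_sym[OF bc]
  obtain H where H: "H \<in> set Hs" "{a, b, c} \<subseteq> H"
    using running_intersection_clique_in_copy[OF RI, of a "{a, b, c}" b] ab ac bc sym distinct
    by auto
  moreover have "x \<in> H"
    if xa: "tree_adj Hs x a" and xb: "tree_adj Hs x b" and xc: "tree_adj Hs x c" for x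
  proof -
    note sym' = tree_adj_sym[OF xa] tree_adj_sym[OF xb] tree_adj_sym[OF xc]
    obtain H' where "H' \<in> set Hs" "{a, b, c, x} \<subseteq> H'"
      using running_intersection_clique_in_copy[OF RI, of a "{a, b, c, x}" b]
        ab ac bc sym xa xb xc sym' distinct by auto
    moreover have "H' = H"
      using kr_tree_copies_eqI[OF kr, of H' H a b c] calculation H distinct by auto
    ultimately show ?thesis by auto
  qed
  ultimately show ?thesis using that by blast
qed

lemma kr_tree_adj_if_three_common_neighbours:
  assumes kr: "kr_tree r Hs" and "u \<noteq> v" "3 \<le> card X"
    and common: "\<And>x. x \<in> X \<Longrightarrow> tree_adj Hs u x \<and> tree_adj Hs v x"
  shows "tree_adj Hs u v"
proof (rule ccontr)
  assume nadj: "\<not> tree_adj Hs u v"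
  have RI: "running_intersection Hs"
    using kr by (rule kr_tree_imp_running_intersection)
  have X_clique: "tree_adj Hs x y" if "x \<in> X" "y \<in> X" "x \<noteq> y" for x y
  proof -
    from common[OF that(1)] common[OF that(2)]
    have square: "tree_adj Hs u x" "tree_adj Hs x v" "tree_adj Hs v y" "tree_adj Hs y u"
      by (simp_all add: tree_adj_commute)
    show ?thesis
      using running_intersection_square_chord[OF RI square] that(3) assms(2) nadj by blast
  qed
  have "X \<noteq> {}"
    using assms(3) by auto
  then obtain x where x: "x \<in> X"
    by blast
  have copy: "\<exists>H\<in>set Hs. insert w X \<subseteq> H" if w: "w \<in> {u, v}" for w
  proof -
    have wX: "tree_adj Hs w y \<and> tree_adj Hs y w" if "y \<in> X" for y
      using common[OF that] w by (auto simp: tree_adj_commute)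
    have "tree_adj Hs p q" if "p \<in> insert w X" "q \<in> insert w X" "p \<noteq> q" for p q
      using that wX X_clique by blast
    moreover have "w \<noteq> x"
      using wX[OF x] unfolding tree_adj_def by blast
    ultimately show ?thesis
      using running_intersection_clique_in_copy[OF RI, of w "insert w X" x] x by blast
  qed
  obtain H G where H: "H \<in> set Hs" "insert u X \<subseteq> H" and G: "G \<in> set Hs" "insert v X \<subseteq> G"
    using copy[of u] copy[of v] by blast
  have "H \<noteq> G"
    using H G nadj assms(2) unfolding tree_adj_def by blast
  then have "card (H \<inter> G) \<le> 2"
    using kr_tree_card_Int_copies[OF kr H(1) G(1)] by blast
  moreover have "card X \<le> card (H \<inter> G)"
    using H G by (intro card_mono) (auto intro: kr_tree_finite_copy[OF kr])
  ultimately show False using assms(3) by simp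
qed

lemma kr_tree_copies_through_edge:
  assumes kr: "kr_tree r Hs" and "tree_adj Hs y1 y2"
    and "tree_adj Hs u y1" "tree_adj Hs u y2" "tree_adj Hs v y1" "tree_adj Hs v y2"
    and "\<not> tree_adj Hs u v" "u \<noteq> v"
  obtains H G where "H \<in> set Hs" "G \<in> set Hs" "u \<in> H" "v \<in> G" "H \<inter> G = {y1, y2}"
    and "\<And>x. tree_adj Hs x u \<Longrightarrow> tree_adj Hs x y1 \<Longrightarrow> tree_adj Hs x y2 \<Longrightarrow> x \<in> H"
    and "\<And>x. tree_adj Hs x v \<Longrightarrow> tree_adj Hs x y1 \<Longrightarrow> tree_adj Hs x y2 \<Longrightarrow> x \<in> G"
proof -
  obtain H where H: "H \<in> set Hs" "{u, y1, y2} \<subseteq> H"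
    and absorb_H: "\<And>x. tree_adj Hs x u \<Longrightarrow> tree_adj Hs x y1 \<Longrightarrow> tree_adj Hs x y2 \<Longrightarrow> x \<in> H"
    using kr_tree_triangle_copy[OF kr assms(3,4,2)] by blast
  obtain G where G: "G \<in> set Hs" "{v, y1, y2} \<subseteq> G"
    and absorb_G: "\<And>x. tree_adj Hs x v \<Longrightarrow> tree_adj Hs x y1 \<Longrightarrow> tree_adj Hs x y2 \<Longrightarrow> x \<in> G"
    using kr_tree_triangle_copy[OF kr assms(5,6,2)] by blast
  have "H \<noteq> G"
    using H G assms(7,8) unfolding tree_adj_def by blast
  have HG: "H \<inter> G = {y1, y2}"
  proof
    show "H \<inter> G \<subseteq> {y1, y2}"
    proof
      fix p assume p: "p \<in> H \<inter> G"
      show "p \<in> {y1, y2}"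
      proof (rule ccontr)
        assume "p \<notin> {y1, y2}"
        moreover have "y1 \<noteq> y2"
          using assms(2) unfolding tree_adj_def by blast
        ultimately have "H = G"
          using kr_tree_copies_eqI[OF kr H(1) G(1), of y1 y2 p] H G p by auto
        with \<open>H \<noteq> G\<close> show False ..
      qed
    qed
  qed (use H G in auto)
  show ?thesis
    by (rule that[OF H(1) G(1) _ _ HG absorb_H absorb_G]) (use H G in auto)
qed

section \<open>Stable states of the bootstrap percolation process\<close>

lemma bp_step_mono: "bp_step r Hs A A' \<Longrightarrow> A \<subseteq> A'"
  unfolding bp_step_def by blast

lemma bp_steps_mono: "(bp_step r Hs)\<^sup>*\<^sup>* A B \<Longrightarrow> A \<subseteq> B"
  by (induction rule: rtranclp_induct) (auto dest: bp_step_mono)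

lemma stable_no_usual_step:
  assumes "\<nexists>F'. bp_step r Hs F F'"
  shows "\<not> usual_step r Hs F v"
proof
  assume "usual_step r Hs F v"
  then have "bp_step r Hs F (insert v F)"
    unfolding bp_step_def by blast
  with assms show False by blast
qed

lemma stable_card_infected_neighbours:
  assumes "\<nexists>F'. bp_step r Hs F F'" "v \<in> tree_verts Hs" "v \<notin> F"
  shows "card {w \<in> F. tree_adj Hs v w} < r - 2"
  using stable_no_usual_step[OF assms(1), of v] assms(2,3)
  unfolding usual_step_def doubleton_in_tree_edges_iff by auto

lemma stable_card_Int_copy_less:
  assumes kr: "kr_tree r Hs" and stable: "\<nexists>F'. bp_step r Hs F F'"
    and H: "H \<in> set Hs" and G: "G \<in> set Hs" and HG: "H \<inter> G = {y1, y2}" "y1 \<noteq> y2"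
    and uninfected: "y1 \<notin> F" "y2 \<notin> F" and "G \<inter> F \<noteq> {}"
  shows "card (H \<inter> F) < r - 4"
proof (rule ccontr)
  assume "\<not> card (H \<inter> F) < r - 4"
  have fin: "finite (H \<inter> F)" "finite (G \<inter> F)"
    using kr_tree_finite_copy[OF kr] H G by auto
  have y1: "y1 \<in> tree_verts Hs"
    using H HG unfolding tree_verts_def by blast
  have "(H \<inter> F) \<union> (G \<inter> F) \<subseteq> {w \<in> F. tree_adj Hs y1 w}"
    using H G HG uninfected unfolding tree_adj_def by blast
  moreover have "finite {w \<in> F. tree_adj Hs y1 w}"
    using kr by (rule kr_tree_finite_neighbours)
  ultimately have "card ((H \<inter> F) \<union> (G \<inter> F)) < r - 2"
    using stable_card_infected_neighbours[OF stable y1 uninfected(1)] card_mono le_less_trans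
    by blast
  moreover have "(H \<inter> F) \<inter> (G \<inter> F) = {}"
    using HG uninfected by auto
  moreover have "1 \<le> card (G \<inter> F)"
    using fin(2) \<open>G \<inter> F \<noteq> {}\<close> by (simp add: Suc_le_eq card_gt_0_iff)
  ultimately have counts: "card (H \<inter> F) = r - 4" "card (G \<inter> F) = 1"
    using card_Un_disjoint[OF fin] \<open>\<not> card (H \<inter> F) < r - 4\<close> by auto
  obtain i j where ij: "i < length Hs" "j < length Hs" "H = Hs ! i" "G = Hs ! j"
    using H G by (auto simp: in_set_conv_nth)
  moreover have "H \<noteq> G"
    using HG uninfected \<open>G \<inter> F \<noteq> {}\<close> by auto
  ultimately have "i \<noteq> j" by blast
  have edge: "{y1, y2} \<subseteq> H" "{y1, y2} \<subseteq> G"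
    using HG by auto
  have "internal_edge Hs {y1, y2}"
    unfolding internal_edge_def doubleton_in_tree_edges_iff tree_adj_def
    using ij \<open>i \<noteq> j\<close> edge HG(2) H by blast
  then have "bp_step r Hs F (insert y1 F)"
    unfolding bp_step_def using stable_no_usual_step[OF stable] ij \<open>i \<noteq> j\<close> edge counts uninfected
    by blast
  with stable show False by blast
qed

lemma stable_tree_adj_if_infected:
  assumes kr: "kr_tree r Hs" and stable: "\<nexists>F'. bp_step r Hs F F'"
    and X: "finite X" "card X = r - 2" "u \<notin> X" "v \<notin> X"
    and "u \<noteq> v" "v \<in> F" "\<not> X \<subseteq> F"
    and uX: "\<And>x. x \<in> X \<Longrightarrow> tree_adj Hs u x"
    and uninfected_X:
      "\<And>x z. x \<in> X - F \<Longrightarrow> z \<in> insert u (insert v X) \<Longrightarrow> z \<noteq> x \<Longrightarrow> tree_adj Hs x z"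
  shows "tree_adj Hs u v"
proof (rule ccontr)
  assume nadj: "\<not> tree_adj Hs u v"
  have split: "card X = card (X \<inter> F) + card (X - F)"
    using X(1) by (rule card_Int_Diff)
  obtain y where y: "y \<in> X - F"
    using \<open>\<not> X \<subseteq> F\<close> by blast
  have "card (insert v (X \<inter> F)) \<le> card {w \<in> F. tree_adj Hs y w}"
    using uninfected_X[OF y] y \<open>v \<in> F\<close>
    by (intro card_mono[OF kr_tree_finite_neighbours[OF kr]]) auto
  also have "\<dots> < r - 2"
    using stable_card_infected_neighbours[OF stable] tree_adj_in_tree_verts[OF uX] y by blast
  finally have "2 \<le> card (X - F)"
    using X split by simp
  then obtain y1 y2 where y12: "y1 \<in> X - F" "y2 \<in> X - F" "y1 \<noteq> y2"
    using card_le_Suc0_iff_eq[of "X - F"] X(1) by auto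
  have y12_adj: "tree_adj Hs x z" if "x \<in> {y1, y2}" "z \<in> insert u (insert v X)" "z \<noteq> x" for x z
    using uninfected_X that y12 by blast
  have adj: "tree_adj Hs y1 y2" "tree_adj Hs u y1" "tree_adj Hs u y2" "tree_adj Hs v y1"
    "tree_adj Hs v y2"
    using y12_adj[of y1 y2] y12_adj[of y1 v] y12_adj[of y2 v] uX[of y1] uX[of y2] y12 X(4)
    by (auto simp: tree_adj_commute)
  obtain H G where HG: "H \<in> set Hs" "G \<in> set Hs" "u \<in> H" "v \<in> G" "H \<inter> G = {y1, y2}"
    and absorb_H: "\<And>x. tree_adj Hs x u \<Longrightarrow> tree_adj Hs x y1 \<Longrightarrow> tree_adj Hs x y2 \<Longrightarrow> x \<in> H"
    and absorb_G: "\<And>x. tree_adj Hs x v \<Longrightarrow> tree_adj Hs x y1 \<Longrightarrow> tree_adj Hs x y2 \<Longrightarrow> x \<in> G"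
    using kr_tree_copies_through_edge[OF kr adj nadj \<open>u \<noteq> v\<close>] by blast
  have X_H: "X \<subseteq> H"
  proof
    fix x assume x: "x \<in> X"
    show "x \<in> H"
    proof (cases "x \<in> {y1, y2}")
      case False
      then have "tree_adj Hs x u" "tree_adj Hs x y1" "tree_adj Hs x y2"
        using uX[OF x] y12_adj[of y1 x] y12_adj[of y2 x] x by (simp_all add: tree_adj_commute)
      then show ?thesis
        by (rule absorb_H)
    qed (use HG in auto)
  qed
  have "X - F \<subseteq> G"
  proof
    fix x assume x: "x \<in> X - F"
    show "x \<in> G"
    proof (cases "x \<in> {y1, y2}")
      case False
      then have "tree_adj Hs x v" "tree_adj Hs x y1" "tree_adj Hs x y2"
        using uninfected_X[OF x] x y12 X(4) by auto
      then show ?thesis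
        by (rule absorb_G)
    qed (use HG in auto)
  qed
  with X_H HG have "X - F \<subseteq> {y1, y2}"
    by blast
  then have "card (X - F) \<le> card {y1, y2}"
    by (rule card_mono[rotated]) simp
  moreover have "card (X \<inter> F) \<le> card (H \<inter> F)"
    using X_H kr_tree_finite_copy[OF kr HG(1)] by (intro card_mono) auto
  ultimately have "r - 4 \<le> card (H \<inter> F)"
    using split X(2) y12(3) by simp
  moreover have "card (H \<inter> F) < r - 4"
    using stable_card_Int_copy_less[OF kr stable HG(1,2,5)] y12 HG(4) \<open>v \<in> F\<close> by auto
  ultimately show False by simp
qed

lemma stable_tree_adj_if_outside:
  assumes r: "5 \<le> r" and kr: "kr_tree r Hs" and stable: "\<nexists>F'. bp_step r Hs F F'"
    and W: "F \<subseteq> W" "W \<inter> tree_verts Hs \<subseteq> F"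
    and K: "finite K" "card K = r" "u \<in> K" "v \<in> K" "u \<noteq> v"
    and others: "\<And>x y. x \<in> K \<Longrightarrow> y \<in> K \<Longrightarrow> x \<noteq> y \<Longrightarrow> {x, y} \<noteq> {u, v} \<Longrightarrow>
      {x, y} \<in> complete_edges W \<union> tree_edges Hs"
    and "u \<notin> W"
  shows "tree_adj Hs u v"
proof (rule ccontr)
  assume nadj: "\<not> tree_adj Hs u v"
  define X where "X = K - {u, v}"
  have X: "finite X" "card X = r - 2" "u \<notin> X" "v \<notin> X"
    using K unfolding X_def by (auto simp: card_Diff_subset)
  have outside_adj: "tree_adj Hs x z"
    if "x \<in> K" "x \<notin> W" "z \<in> K" "z \<noteq> x" "{x, z} \<noteq> {u, v}" for x z
    using others[OF that(1,3) that(4)[symmetric] that(5)] that(2)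
    by (simp add: doubleton_in_complete_edges_iff doubleton_in_tree_edges_iff)
  have uX: "tree_adj Hs u x" if "x \<in> X" for x
    using outside_adj[of u x] that K \<open>u \<notin> W\<close> unfolding X_def by (auto simp: doubleton_eq_iff)
  have X_tree_verts: "X \<subseteq> tree_verts Hs"
    using tree_adj_in_tree_verts[OF uX] by blast
  have "\<not> X \<subseteq> F"
  proof
    assume "X \<subseteq> F"
    then have "card X \<le> card {w \<in> F. tree_adj Hs u w}"
      using uX by (intro card_mono[OF kr_tree_finite_neighbours[OF kr]]) auto
    moreover have "card {w \<in> F. tree_adj Hs u w} < r - 2"
    proof (rule stable_card_infected_neighbours[OF stable])
      obtain x where "x \<in> X"
        using X(2) r by fastforce
      then show "u \<in> tree_verts Hs"
        using tree_adj_in_tree_verts[OF uX] by blast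
      show "u \<notin> F"
        using \<open>u \<notin> W\<close> W(1) by blast
    qed
    ultimately show False
      using X(2) by simp
  qed
  have uninfected_X: "tree_adj Hs x z"
    if "x \<in> X - F" "z \<in> insert u (insert v X)" "z \<noteq> x" for x z
  proof -
    have "x \<notin> W"
      using that(1) X_tree_verts W(2) by blast
    then show ?thesis
      using outside_adj[of x z] that K(3,4) unfolding X_def by (auto simp: doubleton_eq_iff)
  qed
  show False
  proof (cases "v \<in> W")
    case False
    have "tree_adj Hs v x" if "x \<in> X" for x
      using outside_adj[of v x] that K False unfolding X_def by (auto simp: doubleton_eq_iff)
    then have "tree_adj Hs u v"
      using kr_tree_adj_if_three_common_neighbours[OF kr \<open>u \<noteq> v\<close>, of X] uX X(2) r by auto
    with nadj show False ..
  next
    case True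
    obtain y where "y \<in> X - F"
      using \<open>\<not> X \<subseteq> F\<close> by blast
    then have "tree_adj Hs y v"
      using uninfected_X[of y v] X(4) by auto
    from tree_adj_in_tree_verts[OF this] have "v \<in> tree_verts Hs"
      by blast
    then have "v \<in> F"
      using True W(2) by blast
    then have "tree_adj Hs u v"
      using stable_tree_adj_if_infected[OF kr stable X \<open>u \<noteq> v\<close> _ \<open>\<not> X \<subseteq> F\<close> uX uninfected_X]
      by blast
    with nadj show False ..
  qed
qed

lemma stable_kr_step_closed:
  assumes r: "5 \<le> r" and kr: "kr_tree r Hs" and stable: "\<nexists>F'. bp_step r Hs F F'"
    and W: "F \<subseteq> W" "W \<inter> tree_verts Hs \<subseteq> F"
    and K: "finite K" "card K = r" "u \<in> K" "v \<in> K" "u \<noteq> v"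
    and others: "\<And>x y. x \<in> K \<Longrightarrow> y \<in> K \<Longrightarrow> x \<noteq> y \<Longrightarrow> {x, y} \<noteq> {u, v} \<Longrightarrow>
      {x, y} \<in> complete_edges W \<union> tree_edges Hs"
  shows "{u, v} \<in> complete_edges W \<union> tree_edges Hs"
proof (cases "u \<in> W \<and> v \<in> W")
  case True
  then show ?thesis
    using K(5) by (simp add: doubleton_in_complete_edges_iff)
next
  case False
  have others': "{x, y} \<in> complete_edges W \<union> tree_edges Hs"
    if "x \<in> K" "y \<in> K" "x \<noteq> y" "{x, y} \<noteq> {v, u}" for x y
    using others that by (simp add: insert_commute)
  from False have "tree_adj Hs u v \<or> tree_adj Hs v u"
    using stable_tree_adj_if_outside[OF r kr stable W K others]
      stable_tree_adj_if_outside[OF r kr stable W K(1,2,4,3) K(5)[symmetric] others'] by blast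
  then show ?thesis
    by (auto simp: doubleton_in_tree_edges_iff tree_adj_commute)
qed

theorem lemma6p3:
  fixes r :: nat and Hs :: "'a set list" and VG :: "'a set" and EG :: "'a set set"
    and F :: "'a set"
  assumes "r \<ge> 5"
    and "kr_tree r Hs"
    and "finite VG"
    and "is_graph VG EG"
    and "bp_final r Hs (VG \<inter> tree_verts Hs) F"
  shows "kr_closure r (VG \<union> tree_verts Hs) (EG \<union> tree_edges Hs)
           \<subseteq> complete_edges (VG \<union> F) \<union> tree_edges Hs"
proof
  have stable: "\<nexists>F'. bp_step r Hs F F'"
    using assms(5) unfolding bp_final_def by blast
  have "VG \<inter> tree_verts Hs \<subseteq> F"
    using assms(5) bp_steps_mono unfolding bp_final_def by blast
  then have W: "F \<subseteq> VG \<union> F" "(VG \<union> F) \<inter> tree_verts Hs \<subseteq> F"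
    by blast+
  fix e assume "e \<in> kr_closure r (VG \<union> tree_verts Hs) (EG \<union> tree_edges Hs)"
  then show "e \<in> complete_edges (VG \<union> F) \<union> tree_edges Hs"
  proof (induction rule: kr_closure.induct)
    case (base e)
    then show ?case
      using assms(4) complete_edges_mono[of VG "VG \<union> F"] unfolding is_graph_def by blast
  next
    case (add K u v)
    have "{x, y} \<in> complete_edges (VG \<union> F) \<union> tree_edges Hs"
      if "x \<in> K" "y \<in> K" "x \<noteq> y" "{x, y} \<noteq> {u, v}" for x y
      using add.IH that by blast
    then show ?case
      by (rule stable_kr_step_closed[OF assms(1,2) stable W add.hyps(2-6)])
  qed
qed

end
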